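(* Assume that at every optimizer of problem (P4) the density components satisfy $\rho^{(l)}_e(t)\ge\epsilon(\beta)$ for all $e,t,l$. Let (P4') be the problem obtained from (P4) by adding variables $\vartheta^{(l)}_e(t)\in\mathbb{R}$, adding the constraints $(\vartheta^{(l)}_e(t))^2\le\nu^{(l)}_e(t)\rho^{(l)}_e(t)$ for all $e,t,l$, and replacing the objective term $\frac1N\sum_{e,t,l}\nu^{(l)}_e(t)\rho^{(l)}_e(t)$ by $\frac1N\sum_{e,t,l}(\vartheta^{(l)}_e(t))^2$. Then (P4') is equivalent to (P4) in the sense that their optimal objective values coincide and the set of optimizers of (P4) is the projection of the set of optimizers of (P4'). Further, for any feasible point of (P4'), with $u_e(t)=\sum_i\gamma^{(i)}x_{e,i}(t)$ and $\hat J$ the (P4') objective value at that point, one has $\mathrm{Prob}^N\big(\mathbb{E}_{\mathbb{P}(u)}[H(u;\rho)]\ge\hat J\big)\ge1-\beta$.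
   Context: Data: integers $n,T,N\ge1$, $\mathcal E=\{1,\dots,n\}$, $\mathcal T=\{0,\dots,T-1\}$, $\mathcal L=\{1,\dots,N\}$, $\mathcal O=\{1,\dots,m\}$; speed-limit values $0<\gamma^{(1)}<\dots<\gamma^{(m)}$, $\Gamma=\{\gamma^{(i)}\}$; for each $e$: $h_e>0$, $\bar\rho_e>0$, $\bar f_e>0$, $\bar u_e>0$ with $\bar u_e\bar\rho_e>\bar f_e$, $\tau_e=\bar f_e/(\bar u_e\bar\rho_e-\bar f_e)$, $\rho^c_e(v)=\tau_e\bar\rho_e\bar u_e/(\tau_e\bar u_e+v)$; constant $\bar\eta>0$. Random vector $\varpi=(\omega,\rho(0),r^{in},r^{o})$ ($\omega(t)\ge0$, $\rho(0)\in\mathbb{R}^n_{\ge0}$, $r^{in}_e(t),r^o_e(t)\in[0,1)$) with light-tailed distribution $\mathbb{P}_\varpi$; $\varpi^{(l)}=(\omega^{(l)},\rho^{(l)}(0),r^{in,(l)},r^{o,(l)})$, $l\in\mathcal L$, are $N$ i.i.d. samples; $\kappa^{(l)}_e(t)=\frac{1-r^{o,(l)}_{e-1}(t)}{1-r^{in,(l)}_e(t)}$. For $u\in\Gamma^{nT}$, $\mathbb{P}(u)$ is the law of the trajectory $\rho$ given by $\rho_1(t+1)=\rho_1(t)+h_1(\omega(t)-u_1(t)\rho_1(t))$, $\rho_e(t+1)=\rho_e(t)+h_e\kappa_e(t)u_{e-1}(t)\rho_{e-1}(t)-h_eu_e(t)\rho_e(t)$ ($e\ge2$) when $\varpi\sim\mathbb{P}_\varpi$,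 supported on $\{\rho:0\le\rho_e(t)\le\rho^c_e(u_e(t))\}$; $H(u;\rho)=\frac1T\sum_{e,t}\rho_e(t)u_e(t)$; $\beta\in(0,1)$ and $\epsilon(\beta)>0$ is a Wasserstein radius (1-norm) such that, with $\hat{\mathbb{P}}(u)$ the empirical distribution of the sample trajectories, $\mathbb{P}(u)$ lies in the Wasserstein ball of radius $\epsilon(\beta)$ around $\hat{\mathbb{P}}(u)$ intersected with the light-tailed distributions on its support with $\mathrm{Prob}^N$-probability at least $1-\beta$; $\mathrm{Prob}^N$ is the product probability over the samples. Problem (P4): maximize $-\lambda\epsilon(\beta)-\frac1N\sum_{e,t,l}\bar f_e\bar\rho_e\eta^{(l)}_e(t)+\frac1N\sum_{e,t,l}\nu^{(l)}_e(t)\rho^{(l)}_e(t)$ over $x_{e,i}(t),y^{(l)}_{e,i}(t),z^{(l)}_{e,i}(t),\rho^{(l)}_e(t),\lambda,\mu^{(l)}_e(t),\nu^{(l)}_e(t),\eta^{(l)}_e(t)$ subject to, for all $e,i,t,l$: $x_{e,i}(t)\in\{0,1\}$, $\sum_ix_{e,i}(t)=1$, $\gamma^{(1)}\le\sum_i\gamma^{(i)}x_{e,i}(t)\le\gamma^{(m)}$; $0\le z^{(l)}_{e,i}(t)\le\bar\eta x_{e,i}(t)$, $\eta^{(l)}_e(t)-\bar\eta(1-x_{e,i}(t))\le z^{(l)}_{e,i}(t)\le\eta^{(l)}_e(t)$, $0\le y^{(l)}_{e,i}(t)\le\bar\rho_ex_{e,i}(t)$, $\rho^{(l)}_e(t)-\bar\rho_e(1-x_{e,i}(t))\le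 y^{(l)}_{e,i}(t)\le\rho^{(l)}_e(t)$; $\rho^{(l)}_1(t+1)=\rho^{(l)}_1(t)+h_1\omega^{(l)}(t)-h_1\sum_i\gamma^{(i)}y^{(l)}_{1,i}(t)$; for $e\ge2$: $\rho^{(l)}_e(t+1)=\rho^{(l)}_e(t)+h_e\kappa^{(l)}_e(t)\sum_i\gamma^{(i)}y^{(l)}_{e-1,i}(t)-h_e\sum_i\gamma^{(i)}y^{(l)}_{e,i}(t)$ and $\kappa^{(l)}_e(t)\sum_i\gamma^{(i)}y^{(l)}_{e-1,i}(t)\le\min\{\bar f_e,\tau_e\bar u_e(\bar\rho_e-\rho^{(l)}_e(t))\}$; $\rho^{(l)}_e(0)$ equal to the sample data; $\sum_i\gamma^{(i)}(\bar\rho_e-\bar f_e/\bar u_e)z^{(l)}_{e,i}(t)-\mu^{(l)}_e(t)+\bar f_e\eta^{(l)}_e(t)\ge0$; $\nu^{(l)}_e(t)=\mu^{(l)}_e(t)+\frac1T\sum_i\gamma^{(i)}x_{e,i}(t)$; $\max_{e,t}|\nu^{(l)}_e(t)|\le\lambda$; $0\le\eta^{(l)}_e(t)\le\bar\eta$. *)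

theory Defs
  imports "HOL-Probability.Probability"
begin

text \<open>nE = n (cells), nT = T (horizon), nL = N (samples), nO = m (speed-limit options),
  gam i = gamma^(i), hh e = h_e, rbar e = rho-bar_e, fbar e = f-bar_e, ubar e = u-bar_e,
  etab = eta-bar.\<close>
record netp =
  nE :: nat
  nT :: nat
  nL :: nat
  nO :: nat
  gam :: "nat \<Rightarrow> real"
  hh :: "nat \<Rightarrow> real"
  rbar :: "nat \<Rightarrow> real"
  fbar :: "nat \<Rightarrow> real"
  ubar :: "nat \<Rightarrow> real"
  etab :: real

definition Es :: "netp \<Rightarrow> nat set" where "Es P = {1..nE P}"
definition Ts :: "netp \<Rightarrow> nat set" where "Ts P = {..<nT P}"
definition Ls :: "netp \<Rightarrow> nat set" where "Ls P = {1..nL P}"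
definition Os :: "netp \<Rightarrow> nat set" where "Os P = {1..nO P}"

definition tau :: "netp \<Rightarrow> nat \<Rightarrow> real" where
  "tau P e = fbar P e / (ubar P e * rbar P e - fbar P e)"

definition rhoc :: "netp \<Rightarrow> nat \<Rightarrow> real \<Rightarrow> real" where
  "rhoc P e v = tau P e * rbar P e * ubar P e / (tau P e * ubar P e + v)"

definition uOf :: "netp \<Rightarrow> (nat \<Rightarrow> nat \<Rightarrow> nat \<Rightarrow> real) \<Rightarrow> nat \<Rightarrow> nat \<Rightarrow> real" where
  "uOf P x e t = (\<Sum>i\<in>Os P. gam P i * x e i t)"

definition kap :: "(nat \<Rightarrow> nat \<Rightarrow> real) \<Rightarrow> (nat \<Rightarrow> nat \<Rightarrow> real) \<Rightarrow> nat \<Rightarrow> nat \<Rightarrow> real" where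
  "kap rin ro e t = (1 - ro (e - 1) t) / (1 - rin e t)"

text \<open>Decision variables of (P4). Indexing: vx e i t; vy, vz: l e i t; vrho, vmu, vnu, veta: l e t.\<close>
record pt4 =
  vx :: "nat \<Rightarrow> nat \<Rightarrow> nat \<Rightarrow> real"
  vy :: "nat \<Rightarrow> nat \<Rightarrow> nat \<Rightarrow> nat \<Rightarrow> real"
  vz :: "nat \<Rightarrow> nat \<Rightarrow> nat \<Rightarrow> nat \<Rightarrow> real"
  vrho :: "nat \<Rightarrow> nat \<Rightarrow> nat \<Rightarrow> real"
  vlam :: real
  vmu :: "nat \<Rightarrow> nat \<Rightarrow> nat \<Rightarrow> real"
  vnu :: "nat \<Rightarrow> nat \<Rightarrow> nat \<Rightarrow> real"
  veta :: "nat \<Rightarrow> nat \<Rightarrow> nat \<Rightarrow> real"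

text \<open>Sample data: om l t = omega^(l)(t), r0 l e = rho^(l)_e(0), kp l e t = kappa^(l)_e(t).\<close>
definition p4_feas :: "netp \<Rightarrow> (nat \<Rightarrow> nat \<Rightarrow> real) \<Rightarrow> (nat \<Rightarrow> nat \<Rightarrow> real)
    \<Rightarrow> (nat \<Rightarrow> nat \<Rightarrow> nat \<Rightarrow> real) \<Rightarrow> pt4 \<Rightarrow> bool" where
  "p4_feas P om r0 kp p \<longleftrightarrow>
    (let Eset = Es P; Tset = Ts P; Lset = Ls P; Oset = Os P; g = gam P;
         x = vx p; y = vy p; z = vz p; \<rho> = vrho p; \<mu> = vmu p; \<nu> = vnu p; \<eta> = veta p;
         Sy = (\<lambda>l e t. \<Sum>i\<in>Oset. g i * y l e i t)
     in
      (\<forall>e\<in>Eset. \<forall>i\<in>Oset. \<forall>t\<in>Tset. x e i t \<in> {0, 1}) \<and>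
      (\<forall>e\<in>Eset. \<forall>t\<in>Tset. (\<Sum>i\<in>Oset. x e i t) = 1 \<and>
          g 1 \<le> (\<Sum>i\<in>Oset. g i * x e i t) \<and> (\<Sum>i\<in>Oset. g i * x e i t) \<le> g (nO P)) \<and>
      (\<forall>l\<in>Lset. \<forall>e\<in>Eset. \<forall>i\<in>Oset. \<forall>t\<in>Tset.
          0 \<le> z l e i t \<and> z l e i t \<le> etab P * x e i t \<and>
          \<eta> l e t - etab P * (1 - x e i t) \<le> z l e i t \<and> z l e i t \<le> \<eta> l e t \<and>
          0 \<le> y l e i t \<and> y l e i t \<le> rbar P e * x e i t \<and>
          \<rho> l e t - rbar P e * (1 - x e i t) \<le> y l e i t \<and> y l e i t \<le> \<rho> l e t) \<and>
      (\<forall>l\<in>Lset. \<forall>t\<in>Tset. \<rho> l 1 (Suc t) = \<rho> l 1 t + hh P 1 * om l t - hh P 1 * Sy l 1 t) \<and>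
      (\<forall>l\<in>Lset. \<forall>e\<in>Eset. \<forall>t\<in>Tset. 2 \<le> e \<longrightarrow>
          \<rho> l e (Suc t) = \<rho> l e t + hh P e * kp l e t * Sy l (e - 1) t - hh P e * Sy l e t \<and>
          kp l e t * Sy l (e - 1) t \<le> min (fbar P e) (tau P e * ubar P e * (rbar P e - \<rho> l e t))) \<and>
      (\<forall>l\<in>Lset. \<forall>e\<in>Eset. \<rho> l e 0 = r0 l e) \<and>
      (\<forall>l\<in>Lset. \<forall>e\<in>Eset. \<forall>t\<in>Tset.
          (\<Sum>i\<in>Oset. g i * (rbar P e - fbar P e / ubar P e) * z l e i t) - \<mu> l e t + fbar P e * \<eta> l e t \<ge> 0 \<and>
          \<nu> l e t = \<mu> l e t + (1 / real (nT P)) * (\<Sum>i\<in>Oset. g i * x e i t) \<and>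
          0 \<le> \<eta> l e t \<and> \<eta> l e t \<le> etab P) \<and>
      (\<forall>l\<in>Lset. \<forall>e\<in>Eset. \<forall>t\<in>Tset. \<bar>\<nu> l e t\<bar> \<le> vlam p))"

definition p4_obj :: "netp \<Rightarrow> real \<Rightarrow> pt4 \<Rightarrow> real" where
  "p4_obj P eps p =
     - vlam p * eps
     - (1 / real (nL P)) * (\<Sum>e\<in>Es P. \<Sum>t\<in>Ts P. \<Sum>l\<in>Ls P. fbar P e * rbar P e * veta p l e t)
     + (1 / real (nL P)) * (\<Sum>e\<in>Es P. \<Sum>t\<in>Ts P. \<Sum>l\<in>Ls P. vnu p l e t * vrho p l e t)"

text \<open>(P4'): extra variables theta (indexed l e t), the second component of the pair.\<close>
definition p4'_feas :: "netp \<Rightarrow> (nat \<Rightarrow> nat \<Rightarrow> real) \<Rightarrow> (nat \<Rightarrow> nat \<Rightarrow> real)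
    \<Rightarrow> (nat \<Rightarrow> nat \<Rightarrow> nat \<Rightarrow> real) \<Rightarrow> pt4 \<times> (nat \<Rightarrow> nat \<Rightarrow> nat \<Rightarrow> real) \<Rightarrow> bool" where
  "p4'_feas P om r0 kp q \<longleftrightarrow>
     p4_feas P om r0 kp (fst q) \<and>
     (\<forall>l\<in>Ls P. \<forall>e\<in>Es P. \<forall>t\<in>Ts P.
        (snd q l e t)\<^sup>2 \<le> vnu (fst q) l e t * vrho (fst q) l e t)"

definition p4'_obj :: "netp \<Rightarrow> real \<Rightarrow> pt4 \<times> (nat \<Rightarrow> nat \<Rightarrow> nat \<Rightarrow> real) \<Rightarrow> real" where
  "p4'_obj P eps q =
     - vlam (fst q) * eps
     - (1 / real (nL P)) * (\<Sum>e\<in>Es P. \<Sum>t\<in>Ts P. \<Sum>l\<in>Ls P. fbar P e * rbar P e * veta (fst q) l e t)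
     + (1 / real (nL P)) * (\<Sum>e\<in>Es P. \<Sum>t\<in>Ts P. \<Sum>l\<in>Ls P. (snd q l e t)\<^sup>2)"

definition p4_opt :: "netp \<Rightarrow> real \<Rightarrow> (nat \<Rightarrow> nat \<Rightarrow> real) \<Rightarrow> (nat \<Rightarrow> nat \<Rightarrow> real)
    \<Rightarrow> (nat \<Rightarrow> nat \<Rightarrow> nat \<Rightarrow> real) \<Rightarrow> pt4 set" where
  "p4_opt P eps om r0 kp =
     {p. p4_feas P om r0 kp p \<and> (\<forall>p'. p4_feas P om r0 kp p' \<longrightarrow> p4_obj P eps p' \<le> p4_obj P eps p)}"

definition p4'_opt :: "netp \<Rightarrow> real \<Rightarrow> (nat \<Rightarrow> nat \<Rightarrow> real) \<Rightarrow> (nat \<Rightarrow> nat \<Rightarrow> real)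
    \<Rightarrow> (nat \<Rightarrow> nat \<Rightarrow> nat \<Rightarrow> real) \<Rightarrow> (pt4 \<times> (nat \<Rightarrow> nat \<Rightarrow> nat \<Rightarrow> real)) set" where
  "p4'_opt P eps om r0 kp =
     {q. p4'_feas P om r0 kp q \<and> (\<forall>q'. p4'_feas P om r0 kp q' \<longrightarrow> p4'_obj P eps q' \<le> p4'_obj P eps q)}"

text \<open>Sample data extracted from a sample vector s (s l = varpi^(l)).\<close>
definition omS :: "('w \<Rightarrow> nat \<Rightarrow> real) \<Rightarrow> (nat \<Rightarrow> 'w) \<Rightarrow> nat \<Rightarrow> nat \<Rightarrow> real" where
  "omS om s = (\<lambda>l t. om (s l) t)"
definition r0S :: "('w \<Rightarrow> nat \<Rightarrow> real) \<Rightarrow> (nat \<Rightarrow> 'w) \<Rightarrow> nat \<Rightarrow> nat \<Rightarrow> real" where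
  "r0S r0 s = (\<lambda>l e. r0 (s l) e)"
definition kS :: "('w \<Rightarrow> nat \<Rightarrow> nat \<Rightarrow> real) \<Rightarrow> ('w \<Rightarrow> nat \<Rightarrow> nat \<Rightarrow> real) \<Rightarrow> (nat \<Rightarrow> 'w)
    \<Rightarrow> nat \<Rightarrow> nat \<Rightarrow> nat \<Rightarrow> real" where
  "kS rin ro s = (\<lambda>l e t. kap (rin (s l)) (ro (s l)) e t)"

definition TS :: "(nat \<Rightarrow> nat \<Rightarrow> real) measure" where
  "TS = PiM (UNIV :: nat set) (\<lambda>_. PiM (UNIV :: nat set) (\<lambda>_. (borel :: real measure)))"

fun traj :: "netp \<Rightarrow> (nat \<Rightarrow> nat \<Rightarrow> real) \<Rightarrow> (nat \<Rightarrow> real) \<Rightarrow> (nat \<Rightarrow> real)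
    \<Rightarrow> (nat \<Rightarrow> nat \<Rightarrow> real) \<Rightarrow> nat \<Rightarrow> nat \<Rightarrow> real" where
  "traj P u om r0 kp e 0 = r0 e"
| "traj P u om r0 kp e (Suc t) =
     (if e = 1 then traj P u om r0 kp 1 t + hh P 1 * (om t - u 1 t * traj P u om r0 kp 1 t)
      else traj P u om r0 kp e t + hh P e * kp e t * u (e - 1) t * traj P u om r0 kp (e - 1) t
             - hh P e * u e t * traj P u om r0 kp e t)"

definition trajw :: "netp \<Rightarrow> (nat \<Rightarrow> nat \<Rightarrow> real) \<Rightarrow> (nat \<Rightarrow> real) \<Rightarrow> (nat \<Rightarrow> real)
    \<Rightarrow> (nat \<Rightarrow> nat \<Rightarrow> real) \<Rightarrow> nat \<Rightarrow> nat \<Rightarrow> real" where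
  "trajw P u om r0 kp = (\<lambda>e t. if e \<in> Es P \<and> t \<in> Ts P then traj P u om r0 kp e t else 0)"

definition Pu :: "netp \<Rightarrow> 'w measure \<Rightarrow> ('w \<Rightarrow> nat \<Rightarrow> real) \<Rightarrow> ('w \<Rightarrow> nat \<Rightarrow> real)
    \<Rightarrow> ('w \<Rightarrow> nat \<Rightarrow> nat \<Rightarrow> real) \<Rightarrow> ('w \<Rightarrow> nat \<Rightarrow> nat \<Rightarrow> real) \<Rightarrow> (nat \<Rightarrow> nat \<Rightarrow> real)
    \<Rightarrow> (nat \<Rightarrow> nat \<Rightarrow> real) measure" where
  "Pu P Pw om r0 rin ro u = distr Pw TS (\<lambda>w. trajw P u (om w) (r0 w) (kap (rin w) (ro w)))"

definition Phat :: "netp \<Rightarrow> ('w \<Rightarrow> nat \<Rightarrow> real) \<Rightarrow> ('w \<Rightarrow> nat \<Rightarrow> real)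
    \<Rightarrow> ('w \<Rightarrow> nat \<Rightarrow> nat \<Rightarrow> real) \<Rightarrow> ('w \<Rightarrow> nat \<Rightarrow> nat \<Rightarrow> real) \<Rightarrow> (nat \<Rightarrow> nat \<Rightarrow> real)
    \<Rightarrow> (nat \<Rightarrow> 'w) \<Rightarrow> (nat \<Rightarrow> nat \<Rightarrow> real) measure" where
  "Phat P om r0 rin ro u s =
     distr (uniform_count_measure (Ls P)) TS
       (\<lambda>l. trajw P u (om (s l)) (r0 (s l)) (kap (rin (s l)) (ro (s l))))"

definition Hf :: "netp \<Rightarrow> (nat \<Rightarrow> nat \<Rightarrow> real) \<Rightarrow> (nat \<Rightarrow> nat \<Rightarrow> real) \<Rightarrow> real" where
  "Hf P u \<rho> = (1 / real (nT P)) * (\<Sum>e\<in>Es P. \<Sum>t\<in>Ts P. \<rho> e t * u e t)"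

definition norm1 :: "netp \<Rightarrow> (nat \<Rightarrow> nat \<Rightarrow> real) \<Rightarrow> real" where
  "norm1 P \<rho> = (\<Sum>e\<in>Es P. \<Sum>t\<in>Ts P. \<bar>\<rho> e t\<bar>)"

definition Wass :: "netp \<Rightarrow> (nat \<Rightarrow> nat \<Rightarrow> real) measure \<Rightarrow> (nat \<Rightarrow> nat \<Rightarrow> real) measure \<Rightarrow> ennreal" where
  "Wass P Q1 Q2 =
     (INF \<pi>\<in>{\<pi>. sets \<pi> = sets (TS \<Otimes>\<^sub>M TS) \<and> distr \<pi> TS fst = Q1 \<and> distr \<pi> TS snd = Q2}.
        \<integral>\<^sup>+ z. ennreal (norm1 P (\<lambda>e t. fst z e t - snd z e t)) \<partial>\<pi>)"

definition supp_set :: "netp \<Rightarrow> (nat \<Rightarrow> nat \<Rightarrow> real) \<Rightarrow> (nat \<Rightarrow> nat \<Rightarrow> real) set" where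
  "supp_set P u = {\<rho>. \<forall>e\<in>Es P. \<forall>t\<in>Ts P. 0 \<le> \<rho> e t \<and> \<rho> e t \<le> rhoc P e (u e t)}"

definition light_tailed :: "netp \<Rightarrow> (nat \<Rightarrow> nat \<Rightarrow> real) measure \<Rightarrow> bool" where
  "light_tailed P Q \<longleftrightarrow> (\<exists>a>1. (\<integral>\<^sup>+ \<rho>. ennreal (exp (norm1 P \<rho> powr a)) \<partial>Q) < \<infinity>)"

definition wball :: "netp \<Rightarrow> real \<Rightarrow> (nat \<Rightarrow> nat \<Rightarrow> real) \<Rightarrow> (nat \<Rightarrow> nat \<Rightarrow> real) measure
    \<Rightarrow> (nat \<Rightarrow> nat \<Rightarrow> real) measure set" where
  "wball P eps u Q0 =
     {Q. prob_space Q \<and> sets Q = sets TS \<and> (AE \<rho> in Q. \<rho> \<in> supp_set P u) \<and>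
         light_tailed P Q \<and> Wass P Q Q0 \<le> ennreal eps}"

definition wnorm :: "netp \<Rightarrow> ('w \<Rightarrow> nat \<Rightarrow> real) \<Rightarrow> ('w \<Rightarrow> nat \<Rightarrow> real)
    \<Rightarrow> ('w \<Rightarrow> nat \<Rightarrow> nat \<Rightarrow> real) \<Rightarrow> ('w \<Rightarrow> nat \<Rightarrow> nat \<Rightarrow> real) \<Rightarrow> 'w \<Rightarrow> real" where
  "wnorm P om r0 rin ro w =
     (\<Sum>t\<in>Ts P. \<bar>om w t\<bar>) + (\<Sum>e\<in>Es P. \<bar>r0 w e\<bar>) +
     (\<Sum>e\<in>Es P. \<Sum>t\<in>Ts P. \<bar>rin w e t\<bar> + \<bar>ro w e t\<bar>)"

definition ProbN :: "netp \<Rightarrow> 'w measure \<Rightarrow> (nat \<Rightarrow> 'w) measure" where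
  "ProbN P Pw = PiM (Ls P) (\<lambda>_. Pw)"

end

theory Submission
  imports Defs
begin

text \<open>In a feasible point of (P4) the speed-limit variables are binary, so the big-M
  linearisation is exact (y = x \<rho>, z = x \<eta>) and every sample density \<rho>^(l) is the
  trajectory of the traffic dynamics under the speed limits u = \<Sum>_i \<gamma>^(i) x_i.

  Equivalence: a negative \<nu> can be raised to 0, moving the difference into \<mu>, without losing
  feasibility; since \<rho> \<ge> 0 this never decreases the objective, and it strictly increases it
  where \<rho> > 0. Hence optimal points have \<nu> \<ge> 0, and \<theta> = sqrt(\<nu> \<rho>) turns a point of (P4)
  into a point of (P4') of the same value, while \<theta>^2 \<le> \<nu> \<rho> bounds every value of (P4') by a
  value of (P4).

  Probabilistic bound: for every sample l and every density \<xi> in the support of P(u),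
  coordinatewise \<nu> \<rho> - f_e \<rho>_e \<eta> \<le> u \<xi> / T + \<lambda> |\<xi> - \<rho>^(l)|, because the critical density
  satisfies (u (\<rho>_e - f_e / u_e) + f_e) \<rho>^c_e(u) = f_e \<rho>_e. Weak Wasserstein duality turns
  the sum of these bounds into (P4 value) \<le> E_Q[H] for every Q in the Wasserstein ball around
  the empirical distribution, in particular for Q = P(u) on the event of probability at least
  1 - \<beta> provided by the radius \<epsilon>(\<beta>).\<close>

section \<open>Trajectory space and the Wasserstein ball\<close>

abbreviation transport_cost ::
    "netp \<Rightarrow> ((nat \<Rightarrow> nat \<Rightarrow> real) \<times> (nat \<Rightarrow> nat \<Rightarrow> real)) measure \<Rightarrow> ennreal" where
  "transport_cost P \<pi> \<equiv> \<integral>\<^sup>+ z. ennreal (norm1 P (\<lambda>e t. fst z e t - snd z e t)) \<partial>\<pi>"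

lemma space_TS [simp]: "space TS = UNIV"
  unfolding TS_def by (simp add: space_PiM)

lemma measurable_TS_component [measurable]: "(\<lambda>\<rho>. \<rho> e t) \<in> borel_measurable TS"
proof -
  have "(\<lambda>\<rho>::nat \<Rightarrow> nat \<Rightarrow> real. \<rho> e) \<in> measurable TS (Pi\<^sub>M UNIV (\<lambda>_. borel))"
    unfolding TS_def by (rule measurable_component_singleton) simp
  moreover have "(\<lambda>g::nat \<Rightarrow> real. g t) \<in> borel_measurable (Pi\<^sub>M UNIV (\<lambda>_. borel))"
    by (rule measurable_component_singleton) simp
  ultimately show ?thesis
    using measurable_comp by (fastforce simp: comp_def)
qed

lemma Hf_measurable [measurable]: "Hf P u \<in> borel_measurable TS"
  unfolding Hf_def by measurable

lemma norm1_diff_measurable [measurable]: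
  "(\<lambda>\<zeta>. norm1 P (\<lambda>e t. \<zeta> e t - \<xi> e t)) \<in> borel_measurable TS"
  "(\<lambda>z. norm1 P (\<lambda>e t. fst z e t - snd z e t)) \<in> borel_measurable (TS \<Otimes>\<^sub>M TS)"
  unfolding norm1_def by measurable

lemma norm1_nonneg: "0 \<le> norm1 P \<rho>"
  unfolding norm1_def by (intro sum_nonneg) auto

lemma norm1_triangle:
  "norm1 P (\<lambda>e t. a e t - c e t) \<le> norm1 P (\<lambda>e t. a e t - b e t) + norm1 P (\<lambda>e t. b e t - c e t)"
  unfolding norm1_def sum.distrib[symmetric] by (intro sum_mono) auto

lemma measurable_uniform_count_measure_TS:
  "Z \<in> measurable (uniform_count_measure L) TS"
  by (subst measurable_cong_sets[OF sets_uniform_count_measure_count_space refl]) simp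

lemma integrable_empirical:
  fixes f :: "(nat \<Rightarrow> nat \<Rightarrow> real) \<Rightarrow> real"
  assumes "finite L" "f \<in> borel_measurable TS"
  shows "integrable (distr (uniform_count_measure L) TS Z) f"
  unfolding integrable_distr_eq[OF measurable_uniform_count_measure_TS assms(2)]
  by (simp add: uniform_count_measure_def integrable_point_measure_finite[OF assms(1)])

lemma integral_empirical:
  fixes f :: "(nat \<Rightarrow> nat \<Rightarrow> real) \<Rightarrow> real"
  assumes "finite L" "f \<in> borel_measurable TS"
  shows "integral\<^sup>L (distr (uniform_count_measure L) TS Z) f = (\<Sum>l\<in>L. f (Z l)) / card L"
  by (simp add: integral_distr[OF measurable_uniform_count_measure_TS assms(2)]
    integral_uniform_count_measure[OF assms(1)])

lemma coupling_integral_le: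
  assumes sets_\<pi>: "sets \<pi> = sets (TS \<Otimes>\<^sub>M TS)"
    and marg1: "distr \<pi> TS fst = Q" and marg2: "distr \<pi> TS snd = Q'"
    and cost: "transport_cost P \<pi> < \<top>"
    and support: "AE \<xi> in Q. \<xi> \<in> S"
    and h: "h \<in> borel_measurable TS" "integrable Q h"
    and \<psi>: "\<psi> \<in> borel_measurable TS" "integrable Q' \<psi>"
    and dominated: "\<And>\<xi> \<zeta>. \<xi> \<in> S \<Longrightarrow> \<psi> \<zeta> \<le> h \<xi> + lam * norm1 P (\<lambda>e t. \<xi> e t - \<zeta> e t)"
  shows "integral\<^sup>L Q' \<psi> \<le> integral\<^sup>L Q h + lam * enn2real (transport_cost P \<pi>)"
proof -
  let ?c = "\<lambda>z. norm1 P (\<lambda>e t. fst z e t - snd z e t)"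
  have meas_\<pi>: "measurable \<pi> N = measurable (TS \<Otimes>\<^sub>M TS) N" for N
    using sets_\<pi> by (rule measurable_cong_sets) simp
  have fst: "fst \<in> measurable \<pi> TS" and snd: "snd \<in> measurable \<pi> TS"
    and c: "?c \<in> borel_measurable \<pi>"
    unfolding meas_\<pi> by measurable
  obtain x where x: "transport_cost P \<pi> = ennreal x"
    using cost less_top_ennreal by blast
  have int_c: "integrable \<pi> ?c"
    by (rule integrableI_nn_integral_finite[OF c _ x]) (simp add: norm1_nonneg)
  have int_h: "integrable \<pi> (\<lambda>z. h (fst z))"
    using h(2) unfolding marg1[symmetric] integrable_distr_eq[OF fst h(1)] .
  have "integral\<^sup>L Q' \<psi> = (\<integral>z. \<psi> (snd z) \<partial>\<pi>)"
    using integral_distr[OF snd \<psi>(1)] marg2 by simp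
  also have "\<dots> \<le> (\<integral>z. h (fst z) + lam * ?c z \<partial>\<pi>)"
  proof (rule integral_mono_AE)
    show "integrable \<pi> (\<lambda>z. \<psi> (snd z))"
      using \<psi>(2) unfolding marg2[symmetric] integrable_distr_eq[OF snd \<psi>(1)] .
    show "integrable \<pi> (\<lambda>z. h (fst z) + lam * ?c z)"
      using int_h int_c by simp
    have "AE z in \<pi>. fst z \<in> S"
      using support unfolding marg1[symmetric] by (rule AE_distrD[OF fst])
    then show "AE z in \<pi>. \<psi> (snd z) \<le> h (fst z) + lam * ?c z"
      by (rule eventually_mono) (rule dominated)
  qed
  also have "\<dots> = integral\<^sup>L Q h + lam * enn2real (transport_cost P \<pi>)"
    using int_h int_c integral_distr[OF fst h(1)] marg1
      integral_eq_nn_integral[OF c] by (simp add: norm1_nonneg)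
  finally show ?thesis .
qed

lemma le_mult_if_INF_le_ennreal:
  fixes c :: "'a \<Rightarrow> ennreal" and D lam eps :: real
  assumes INF: "(INF x\<in>C. c x) \<le> ennreal eps" and "0 \<le> lam" "0 \<le> eps"
    and bound: "\<And>x. x \<in> C \<Longrightarrow> c x < \<top> \<Longrightarrow> D \<le> lam * enn2real (c x)"
  shows "D \<le> lam * eps"
proof (cases "lam = 0")
  case True
  from INF obtain x where "x \<in> C" "c x < \<top>"
    by (metis INF_less_iff ennreal_less_top le_less_trans)
  with bound True show ?thesis by simp
next
  case False
  with \<open>0 \<le> lam\<close> have lam: "0 < lam" by simp
  have "ennreal (D / lam) \<le> c x" if "x \<in> C" for x
  proof (cases "c x < \<top>")
    case True
    then have "D / lam \<le> enn2real (c x)"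
      using bound[OF that] lam by (simp add: divide_le_eq mult.commute)
    then show ?thesis
      using True by (metis ennreal_enn2real ennreal_leI)
  qed (simp add: less_top[symmetric])
  then have "ennreal (D / lam) \<le> ennreal eps"
    using INF by (meson INF_greatest order_trans)
  then show ?thesis
    using lam \<open>0 \<le> eps\<close> by (simp add: ennreal_le_iff divide_le_eq mult.commute)
qed

text \<open>The least function that is \<lambda>-Lipschitz for norm1 and lies above \<phi> l at the sample point
  Z l; a function dominating each \<phi> l up to \<lambda> times the distance to Z l dominates it everywhere.\<close>

definition sample_envelope ::
    "netp \<Rightarrow> real \<Rightarrow> nat set \<Rightarrow> (nat \<Rightarrow> real) \<Rightarrow> (nat \<Rightarrow> nat \<Rightarrow> nat \<Rightarrow> real) \<Rightarrow> (nat \<Rightarrow> nat \<Rightarrow> real) \<Rightarrow> real"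
  where "sample_envelope P lam L \<phi> Z \<zeta> = Max ((\<lambda>l. \<phi> l - lam * norm1 P (\<lambda>e t. \<zeta> e t - Z l e t)) ` L)"

lemma sample_envelope_measurable:
  "finite L \<Longrightarrow> sample_envelope P lam L \<phi> Z \<in> borel_measurable TS"
  unfolding sample_envelope_def by (intro borel_measurable_Max) measurable

lemma sample_envelope_ge:
  assumes "finite L" "l \<in> L"
  shows "\<phi> l \<le> sample_envelope P lam L \<phi> Z (Z l)"
proof -
  have "\<phi> l - lam * norm1 P (\<lambda>e t. Z l e t - Z l e t) \<le> sample_envelope P lam L \<phi> Z (Z l)"
    unfolding sample_envelope_def by (intro Max_ge finite_imageI imageI assms)
  then show ?thesis by (simp add: norm1_def)
qed

lemma sample_envelope_le:
  assumes "finite L" "L \<noteq> {}" "0 \<le> lam"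
    and dominated: "\<And>l. l \<in> L \<Longrightarrow> \<phi> l \<le> y + lam * norm1 P (\<lambda>e t. \<xi> e t - Z l e t)"
  shows "sample_envelope P lam L \<phi> Z \<zeta> \<le> y + lam * norm1 P (\<lambda>e t. \<xi> e t - \<zeta> e t)"
proof -
  have "sample_envelope P lam L \<phi> Z \<zeta> \<in> (\<lambda>l. \<phi> l - lam * norm1 P (\<lambda>e t. \<zeta> e t - Z l e t)) ` L"
    unfolding sample_envelope_def using assms(1,2) by (intro Max_in) auto
  then obtain l where "l \<in> L"
    and envelope_eq: "sample_envelope P lam L \<phi> Z \<zeta> = \<phi> l - lam * norm1 P (\<lambda>e t. \<zeta> e t - Z l e t)"
    by blast
  have "lam * norm1 P (\<lambda>e t. \<xi> e t - Z l e t)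
      \<le> lam * (norm1 P (\<lambda>e t. \<xi> e t - \<zeta> e t) + norm1 P (\<lambda>e t. \<zeta> e t - Z l e t))"
    using norm1_triangle \<open>0 \<le> lam\<close> by (rule mult_left_mono)
  with dominated[OF \<open>l \<in> L\<close>] show ?thesis
    unfolding envelope_eq by (simp add: algebra_simps)
qed

lemma Wass_empirical_integral_lower_bound:
  fixes Z :: "nat \<Rightarrow> nat \<Rightarrow> nat \<Rightarrow> real"
  assumes L: "finite L" "L \<noteq> {}"
    and support: "AE \<xi> in Q. \<xi> \<in> S"
    and W: "Wass P Q (distr (uniform_count_measure L) TS Z) \<le> ennreal eps"
    and "0 \<le> lam" "0 \<le> eps"
    and h: "h \<in> borel_measurable TS" "integrable Q h"
    and dominated: "\<And>l \<xi>. l \<in> L \<Longrightarrow> \<xi> \<in> S \<Longrightarrow> \<phi> l \<le> h \<xi> + lam * norm1 P (\<lambda>e t. \<xi> e t - Z l e t)"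
  shows "(\<Sum>l\<in>L. \<phi> l) / card L - lam * eps \<le> integral\<^sup>L Q h"
proof -
  define Q' where "Q' = distr (uniform_count_measure L) TS Z"
  define \<psi> where "\<psi> = sample_envelope P lam L \<phi> Z"
  have \<psi>_meas: "\<psi> \<in> borel_measurable TS"
    unfolding \<psi>_def using L(1) by (rule sample_envelope_measurable)
  have \<psi>_le: "\<psi> \<zeta> \<le> h \<xi> + lam * norm1 P (\<lambda>e t. \<xi> e t - \<zeta> e t)" if "\<xi> \<in> S" for \<xi> \<zeta>
    unfolding \<psi>_def using L \<open>0 \<le> lam\<close> dominated[OF _ that] by (rule sample_envelope_le)
  have mean_le: "(\<Sum>l\<in>L. \<phi> l) / card L \<le> integral\<^sup>L Q' \<psi>"
    unfolding Q'_def integral_empirical[OF L(1) \<psi>_meas]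
    using sample_envelope_ge[OF L(1)] by (intro divide_right_mono sum_mono) (auto simp: \<psi>_def)
  have "(\<Sum>l\<in>L. \<phi> l) / card L - integral\<^sup>L Q h \<le> lam * eps"
  proof (rule le_mult_if_INF_le_ennreal)
    show "(INF \<pi>\<in>{\<pi>. sets \<pi> = sets (TS \<Otimes>\<^sub>M TS) \<and> distr \<pi> TS fst = Q \<and> distr \<pi> TS snd = Q'}.
        transport_cost P \<pi>) \<le> ennreal eps"
      using W unfolding Wass_def Q'_def .
    fix \<pi> assume "\<pi> \<in> {\<pi>. sets \<pi> = sets (TS \<Otimes>\<^sub>M TS) \<and> distr \<pi> TS fst = Q \<and> distr \<pi> TS snd = Q'}"
      and cost: "transport_cost P \<pi> < \<top>"
    then have "sets \<pi> = sets (TS \<Otimes>\<^sub>M TS)" "distr \<pi> TS fst = Q" "distr \<pi> TS snd = Q'"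
      by blast+
    from coupling_integral_le[OF this cost support h \<psi>_meas _ \<psi>_le]
    have "integral\<^sup>L Q' \<psi> \<le> integral\<^sup>L Q h + lam * enn2real (transport_cost P \<pi>)"
      using integrable_empirical[OF L(1) \<psi>_meas] unfolding Q'_def by blast
    with mean_le
    show "(\<Sum>l\<in>L. \<phi> l) / card L - integral\<^sup>L Q h \<le> lam * enn2real (transport_cost P \<pi>)"
      by linarith
  qed fact+
  then show ?thesis by simp
qed

section \<open>Feasible points of (P4)\<close>

lemma finite_index_sets [simp]: "finite (Es P)" "finite (Ts P)" "finite (Ls P)" "finite (Os P)"
  by (simp_all add: Es_def Ts_def Ls_def Os_def)

lemma p4_feas_linearisation:
  assumes "p4_feas P om r0 kp p" "l \<in> Ls P" "e \<in> Es P" "i \<in> Os P" "t \<in> Ts P"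
  shows "vx p e i t = 0 \<or> vx p e i t = 1"
    and "0 \<le> vy p l e i t" "vy p l e i t \<le> rbar P e * vx p e i t"
      "vrho p l e t - rbar P e * (1 - vx p e i t) \<le> vy p l e i t" "vy p l e i t \<le> vrho p l e t"
    and "0 \<le> vz p l e i t" "vz p l e i t \<le> etab P * vx p e i t"
      "veta p l e t - etab P * (1 - vx p e i t) \<le> vz p l e i t" "vz p l e i t \<le> veta p l e t"
  using assms unfolding p4_feas_def Let_def by auto

lemma p4_feas_big_M_exact:
  assumes "p4_feas P om r0 kp p" "l \<in> Ls P" "e \<in> Es P" "i \<in> Os P" "t \<in> Ts P"
  shows "vy p l e i t = vx p e i t * vrho p l e t" and "vz p l e i t = vx p e i t * veta p l e t"
  using p4_feas_linearisation[OF assms] by auto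

lemma p4_feas_sum_vy:
  assumes "p4_feas P om r0 kp p" "l \<in> Ls P" "e \<in> Es P" "t \<in> Ts P"
  shows "(\<Sum>i\<in>Os P. gam P i * vy p l e i t) = uOf P (vx p) e t * vrho p l e t"
  unfolding uOf_def sum_distrib_right
  using p4_feas_big_M_exact(1)[OF assms(1-3) _ assms(4)] by (intro sum.cong) auto

lemma p4_feas_sum_vz:
  assumes "p4_feas P om r0 kp p" "l \<in> Ls P" "e \<in> Es P" "t \<in> Ts P"
  shows "(\<Sum>i\<in>Os P. gam P i * (rbar P e - fbar P e / ubar P e) * vz p l e i t)
    = uOf P (vx p) e t * (rbar P e - fbar P e / ubar P e) * veta p l e t"
  unfolding uOf_def sum_distrib_right
  using p4_feas_big_M_exact(2)[OF assms(1-3) _ assms(4)] by (intro sum.cong) auto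

lemma p4_feas_dynamics:
  assumes "p4_feas P om r0 kp p" "l \<in> Ls P" "e \<in> Es P"
  shows "vrho p l e 0 = r0 l e"
    and "t \<in> Ts P \<Longrightarrow> vrho p l e (Suc t) =
      (if e = 1 then vrho p l 1 t + hh P 1 * (om l t - uOf P (vx p) 1 t * vrho p l 1 t)
       else vrho p l e t + hh P e * kp l e t * uOf P (vx p) (e - 1) t * vrho p l (e - 1) t
              - hh P e * uOf P (vx p) e t * vrho p l e t)"
proof -
  show "vrho p l e 0 = r0 l e"
    using assms unfolding p4_feas_def Let_def by simp
  assume t: "t \<in> Ts P"
  show "vrho p l e (Suc t) =
      (if e = 1 then vrho p l 1 t + hh P 1 * (om l t - uOf P (vx p) 1 t * vrho p l 1 t)
       else vrho p l e t + hh P e * kp l e t * uOf P (vx p) (e - 1) t * vrho p l (e - 1) t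
              - hh P e * uOf P (vx p) e t * vrho p l e t)"
  proof (cases "e = 1")
    case True
    have "vrho p l 1 (Suc t) = vrho p l 1 t + hh P 1 * om l t
        - hh P 1 * (\<Sum>i\<in>Os P. gam P i * vy p l 1 i t)"
      using assms(1,2) t unfolding p4_feas_def Let_def by simp
    then show ?thesis
      using True p4_feas_sum_vy[OF assms t] by (simp add: algebra_simps)
  next
    case False
    with assms(3) have "2 \<le> e" "e - 1 \<in> Es P"
      by (auto simp: Es_def)
    then have "vrho p l e (Suc t) = vrho p l e t
        + hh P e * kp l e t * (\<Sum>i\<in>Os P. gam P i * vy p l (e - 1) i t)
        - hh P e * (\<Sum>i\<in>Os P. gam P i * vy p l e i t)"
      using assms t unfolding p4_feas_def Let_def by simp
    then show ?thesis
      using False p4_feas_sum_vy[OF assms t] p4_feas_sum_vy[OF assms(1,2) \<open>e - 1 \<in> Es P\<close> t]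
      by (simp add: algebra_simps)
  qed
qed

lemma p4_feas_dual_constraints:
  assumes "p4_feas P om r0 kp p" "l \<in> Ls P" "e \<in> Es P" "t \<in> Ts P"
  shows "vmu p l e t \<le> (uOf P (vx p) e t * (rbar P e - fbar P e / ubar P e) + fbar P e) * veta p l e t"
    and "vnu p l e t = vmu p l e t + uOf P (vx p) e t / real (nT P)"
    and "0 \<le> veta p l e t" and "\<bar>vnu p l e t\<bar> \<le> vlam p"
proof -
  have "(\<Sum>i\<in>Os P. gam P i * (rbar P e - fbar P e / ubar P e) * vz p l e i t) - vmu p l e t
      + fbar P e * veta p l e t \<ge> 0"
    and "vnu p l e t = vmu p l e t + 1 / real (nT P) * uOf P (vx p) e t"
    and "0 \<le> veta p l e t" and "\<bar>vnu p l e t\<bar> \<le> vlam p"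
    using assms unfolding p4_feas_def Let_def uOf_def by auto
  then show "vmu p l e t \<le> (uOf P (vx p) e t * (rbar P e - fbar P e / ubar P e) + fbar P e) * veta p l e t"
    and "vnu p l e t = vmu p l e t + uOf P (vx p) e t / real (nT P)"
    and "0 \<le> veta p l e t" and "\<bar>vnu p l e t\<bar> \<le> vlam p"
    unfolding p4_feas_sum_vz[OF assms] by (simp_all add: algebra_simps)
qed

lemma p4_feas_update_dual:
  assumes "p4_feas P om r0 kp p"
    and dual: "\<And>l e t. l \<in> Ls P \<Longrightarrow> e \<in> Es P \<Longrightarrow> t \<in> Ts P \<Longrightarrow>
      \<mu> l e t \<le> (uOf P (vx p) e t * (rbar P e - fbar P e / ubar P e) + fbar P e) * veta p l e t \<and>
      \<nu> l e t = \<mu> l e t + uOf P (vx p) e t / real (nT P) \<and> \<bar>\<nu> l e t\<bar> \<le> vlam p"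
  shows "p4_feas P om r0 kp (p\<lparr>vmu := \<mu>, vnu := \<nu>\<rparr>)"
proof -
  have "(\<Sum>i\<in>Os P. gam P i * (rbar P e - fbar P e / ubar P e) * vz p l e i t) - \<mu> l e t
        + fbar P e * veta p l e t \<ge> 0 \<and>
      \<nu> l e t = \<mu> l e t + 1 / real (nT P) * uOf P (vx p) e t \<and>
      \<bar>\<mu> l e t + 1 / real (nT P) * uOf P (vx p) e t\<bar> \<le> vlam p"
    if "l \<in> Ls P" "e \<in> Es P" "t \<in> Ts P" for l e t
    using dual[OF that] unfolding p4_feas_sum_vz[OF assms(1) that] by (auto simp: algebra_simps)
  \<comment> \<open>the bound on \<nu> is stated with \<nu> already substituted, as simp rewrites by the equation first\<close>
  with assms(1) show ?thesis
    unfolding p4_feas_def Let_def uOf_def by simp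
qed

locale traffic_network =
  fixes P :: netp
  assumes dims: "1 \<le> nE P" "1 \<le> nT P" "1 \<le> nL P" "1 \<le> nO P"
    and gam_pos: "\<And>i. i \<in> Os P \<Longrightarrow> 0 < gam P i"
    and cells: "\<And>e. e \<in> Es P \<Longrightarrow>
      0 < rbar P e \<and> 0 < fbar P e \<and> 0 < ubar P e \<and> fbar P e < ubar P e * rbar P e"
begin

lemma first_indices: "1 \<in> Es P" "0 \<in> Ts P" "1 \<in> Ls P" "1 \<in> Os P"
  using dims by (auto simp: Es_def Ts_def Ls_def Os_def)

lemma p4_feas_rho_nonneg:
  assumes "p4_feas P om r0 kp p" "l \<in> Ls P" "e \<in> Es P" "t \<in> Ts P"
  shows "0 \<le> vrho p l e t"
  using p4_feas_linearisation(2,5)[OF assms(1-3) first_indices(4) assms(4)] by linarith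

lemma p4_feas_uOf_pos:
  assumes "p4_feas P om r0 kp p" "e \<in> Es P" "t \<in> Ts P"
  shows "0 < uOf P (vx p) e t"
proof -
  have "gam P 1 \<le> uOf P (vx p) e t"
    using assms unfolding p4_feas_def Let_def uOf_def by auto
  with gam_pos[OF first_indices(4)] show ?thesis by linarith
qed

lemma p4_feas_lam_nonneg:
  assumes "p4_feas P om r0 kp p"
  shows "0 \<le> vlam p"
  using p4_feas_dual_constraints(4)[OF assms first_indices(3,1,2)] by linarith

lemma rbar_minus_fbar_div_ubar_nonneg:
  assumes "e \<in> Es P"
  shows "0 \<le> rbar P e - fbar P e / ubar P e"
  using cells[OF assms] by (simp add: field_simps)

end

section \<open>Equivalence of (P4) and (P4')\<close>

lemma relaxation_equivalence:
  fixes f :: "'a \<Rightarrow> real" and g :: "'a \<times> 'b \<Rightarrow> real"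
  assumes proj: "\<And>q. G q \<Longrightarrow> F (fst q) \<and> g q \<le> f (fst q)"
    and lift: "\<And>p. F p \<Longrightarrow> \<exists>q. G q \<and> f p \<le> g q"
    and lift_opt: "\<And>p. F p \<Longrightarrow> \<forall>p'. F p' \<longrightarrow> f p' \<le> f p \<Longrightarrow> \<exists>b. G (p, b) \<and> g (p, b) = f p"
  shows "(SUP p\<in>{p. F p}. ereal (f p)) = (SUP q\<in>{q. G q}. ereal (g q))"
    and "{p. F p \<and> (\<forall>p'. F p' \<longrightarrow> f p' \<le> f p)} = fst ` {q. G q \<and> (\<forall>q'. G q' \<longrightarrow> g q' \<le> g q)}"
proof -
  show "(SUP p\<in>{p. F p}. ereal (f p)) = (SUP q\<in>{q. G q}. ereal (g q))"
  proof (rule antisym)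
    show "(SUP p\<in>{p. F p}. ereal (f p)) \<le> (SUP q\<in>{q. G q}. ereal (g q))"
      using lift by (intro SUP_mono) auto
    show "(SUP q\<in>{q. G q}. ereal (g q)) \<le> (SUP p\<in>{p. F p}. ereal (f p))"
      using proj by (intro SUP_mono) auto
  qed
  show "{p. F p \<and> (\<forall>p'. F p' \<longrightarrow> f p' \<le> f p)} = fst ` {q. G q \<and> (\<forall>q'. G q' \<longrightarrow> g q' \<le> g q)}"
  proof (intro equalityI subsetI)
    fix p assume "p \<in> {p. F p \<and> (\<forall>p'. F p' \<longrightarrow> f p' \<le> f p)}"
    then have p: "F p" "\<forall>p'. F p' \<longrightarrow> f p' \<le> f p" by auto
    obtain b where b: "G (p, b)" "g (p, b) = f p"
      using lift_opt[OF p] by blast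
    have "g q' \<le> g (p, b)" if "G q'" for q'
      using proj[OF that] p(2) b(2) by fastforce
    with b(1) show "p \<in> fst ` {q. G q \<and> (\<forall>q'. G q' \<longrightarrow> g q' \<le> g q)}"
      by (auto intro!: image_eqI[where x="(p, b)"])
  next
    fix p assume "p \<in> fst ` {q. G q \<and> (\<forall>q'. G q' \<longrightarrow> g q' \<le> g q)}"
    then obtain q where q: "G q" "\<forall>q'. G q' \<longrightarrow> g q' \<le> g q" and p: "p = fst q"
      by auto
    have "f p' \<le> f p" if "F p'" for p'
      using lift[OF that] q proj[OF q(1)] p by force
    then show "p \<in> {p. F p \<and> (\<forall>p'. F p' \<longrightarrow> f p' \<le> f p)}"
      using proj[OF q(1)] p by auto
  qed
qed

definition raise_nu :: "pt4 \<Rightarrow> pt4" where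
  "raise_nu p = p\<lparr>vmu := \<lambda>l e t. vmu p l e t + max 0 (- vnu p l e t),
                  vnu := \<lambda>l e t. max (vnu p l e t) 0\<rparr>"

lemma p4_obj_raise_nu:
  "p4_obj P eps (raise_nu p) = p4_obj P eps p
     + (\<Sum>e\<in>Es P. \<Sum>t\<in>Ts P. \<Sum>l\<in>Ls P. (max (vnu p l e t) 0 - vnu p l e t) * vrho p l e t) / real (nL P)"
  unfolding p4_obj_def raise_nu_def
  by (simp add: left_diff_distrib sum_subtractf diff_divide_distrib algebra_simps)

definition theta_of :: "pt4 \<Rightarrow> nat \<Rightarrow> nat \<Rightarrow> nat \<Rightarrow> real" where
  "theta_of p = (\<lambda>l e t. sqrt (vnu p l e t * vrho p l e t))"

lemma p4'_obj_le_p4_obj: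
  assumes "p4'_feas P om r0 kp q"
  shows "p4'_obj P eps q \<le> p4_obj P eps (fst q)"
proof -
  have "(\<Sum>e\<in>Es P. \<Sum>t\<in>Ts P. \<Sum>l\<in>Ls P. (snd q l e t)\<^sup>2)
      \<le> (\<Sum>e\<in>Es P. \<Sum>t\<in>Ts P. \<Sum>l\<in>Ls P. vnu (fst q) l e t * vrho (fst q) l e t)"
    using assms unfolding p4'_feas_def by (intro sum_mono) auto
  then show ?thesis
    unfolding p4'_obj_def p4_obj_def by (simp add: divide_right_mono)
qed

context traffic_network
begin

text \<open>Where \<nu> < 0 the raised \<mu> equals -u/T < 0, so its dual constraint holds trivially.\<close>

lemma p4_feas_raise_nu:
  assumes "p4_feas P om r0 kp p"
  shows "p4_feas P om r0 kp (raise_nu p)"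
  unfolding raise_nu_def
proof (rule p4_feas_update_dual[OF assms])
  fix l e t assume idx: "l \<in> Ls P" "e \<in> Es P" "t \<in> Ts P"
  note dual = p4_feas_dual_constraints[OF assms idx]
  have "0 \<le> (uOf P (vx p) e t * (rbar P e - fbar P e / ubar P e) + fbar P e) * veta p l e t"
    using p4_feas_uOf_pos[OF assms idx(2,3)] rbar_minus_fbar_div_ubar_nonneg[OF idx(2)] cells[OF idx(2)] dual(3)
    by simp
  moreover have "0 < uOf P (vx p) e t / real (nT P)"
    using p4_feas_uOf_pos[OF assms idx(2,3)] dims(2) by simp
  ultimately show "vmu p l e t + max 0 (- vnu p l e t)
        \<le> (uOf P (vx p) e t * (rbar P e - fbar P e / ubar P e) + fbar P e) * veta p l e t \<and>
      max (vnu p l e t) 0 = vmu p l e t + max 0 (- vnu p l e t) + uOf P (vx p) e t / real (nT P) \<and>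
      \<bar>max (vnu p l e t) 0\<bar> \<le> vlam p"
    using dual(1,2,4) by (auto simp: max_def)
qed

lemma p4_obj_le_raise_nu:
  assumes "p4_feas P om r0 kp p"
  shows "p4_obj P eps p \<le> p4_obj P eps (raise_nu p)"
  unfolding p4_obj_raise_nu using p4_feas_rho_nonneg[OF assms]
  by (simp add: sum_nonneg mult_nonneg_nonneg)

lemma p4_opt_nu_nonneg:
  assumes opt: "p \<in> p4_opt P eps om r0 kp"
    and rho_pos: "\<forall>l\<in>Ls P. \<forall>e\<in>Es P. \<forall>t\<in>Ts P. 0 < vrho p l e t"
    and idx: "l \<in> Ls P" "e \<in> Es P" "t \<in> Ts P"
  shows "0 \<le> vnu p l e t"
proof (rule ccontr)
  assume "\<not> 0 \<le> vnu p l e t"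
  have feas: "p4_feas P om r0 kp p"
    using opt by (simp add: p4_opt_def)
  let ?gain = "\<lambda>l e t. (max (vnu p l e t) 0 - vnu p l e t) * vrho p l e t"
  have gain_nonneg: "0 \<le> ?gain l e t" if "l \<in> Ls P" "e \<in> Es P" "t \<in> Ts P" for l e t
    using p4_feas_rho_nonneg[OF feas that] by simp
  have "0 < ?gain l e t"
    using \<open>\<not> 0 \<le> vnu p l e t\<close> rho_pos idx by (simp add: mult_neg_pos)
  then have "0 < (\<Sum>l\<in>Ls P. ?gain l e t)"
    using idx gain_nonneg by (intro sum_pos2[OF _ idx(1)]) auto
  then have "0 < (\<Sum>t\<in>Ts P. \<Sum>l\<in>Ls P. ?gain l e t)"
    using idx gain_nonneg by (intro sum_pos2[OF _ idx(3)]) (auto intro!: sum_nonneg)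
  then have "0 < (\<Sum>e\<in>Es P. \<Sum>t\<in>Ts P. \<Sum>l\<in>Ls P. ?gain l e t)"
    using idx gain_nonneg by (intro sum_pos2[OF _ idx(2)]) (auto intro!: sum_nonneg)
  then have "p4_obj P eps p < p4_obj P eps (raise_nu p)"
    unfolding p4_obj_raise_nu using dims(3) by simp
  with opt p4_feas_raise_nu[OF feas] show False
    by (simp add: p4_opt_def not_le[symmetric])
qed

lemma p4'_feas_theta_of:
  assumes "p4_feas P om r0 kp p" and "\<forall>l\<in>Ls P. \<forall>e\<in>Es P. \<forall>t\<in>Ts P. 0 \<le> vnu p l e t"
  shows "p4'_feas P om r0 kp (p, theta_of p)"
  using assms p4_feas_rho_nonneg[OF assms(1)] unfolding p4'_feas_def theta_of_def by simp

lemma p4'_obj_theta_of: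
  assumes "p4_feas P om r0 kp p" and "\<forall>l\<in>Ls P. \<forall>e\<in>Es P. \<forall>t\<in>Ts P. 0 \<le> vnu p l e t"
  shows "p4'_obj P eps (p, theta_of p) = p4_obj P eps p"
proof -
  have "(\<Sum>e\<in>Es P. \<Sum>t\<in>Ts P. \<Sum>l\<in>Ls P. (theta_of p l e t)\<^sup>2)
      = (\<Sum>e\<in>Es P. \<Sum>t\<in>Ts P. \<Sum>l\<in>Ls P. vnu p l e t * vrho p l e t)"
    using assms p4_feas_rho_nonneg[OF assms(1)] by (intro sum.cong refl) (simp add: theta_of_def)
  then show ?thesis
    unfolding p4'_obj_def p4_obj_def by simp
qed

lemma p4_p4'_equivalent:
  assumes "\<forall>p\<in>p4_opt P eps om r0 kp. \<forall>l\<in>Ls P. \<forall>e\<in>Es P. \<forall>t\<in>Ts P. 0 < vrho p l e t"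
  shows "(SUP p\<in>{p. p4_feas P om r0 kp p}. ereal (p4_obj P eps p))
          = (SUP q\<in>{q. p4'_feas P om r0 kp q}. ereal (p4'_obj P eps q))"
    and "p4_opt P eps om r0 kp = fst ` p4'_opt P eps om r0 kp"
proof -
  have raised_nu_nonneg: "\<forall>l\<in>Ls P. \<forall>e\<in>Es P. \<forall>t\<in>Ts P. 0 \<le> vnu (raise_nu p) l e t" for p
    by (simp add: raise_nu_def)
  have proj: "p4_feas P om r0 kp (fst q) \<and> p4'_obj P eps q \<le> p4_obj P eps (fst q)"
    if "p4'_feas P om r0 kp q" for q
    using that p4'_obj_le_p4_obj[OF that] by (simp add: p4'_feas_def)
  have lift: "\<exists>q. p4'_feas P om r0 kp q \<and> p4_obj P eps p \<le> p4'_obj P eps q"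
    if "p4_feas P om r0 kp p" for p
    using p4'_feas_theta_of[OF p4_feas_raise_nu[OF that] raised_nu_nonneg]
      p4'_obj_theta_of[OF p4_feas_raise_nu[OF that] raised_nu_nonneg] p4_obj_le_raise_nu[OF that]
    by (intro exI[where x="(raise_nu p, theta_of (raise_nu p))"]) simp
  have lift_opt: "\<exists>b. p4'_feas P om r0 kp (p, b) \<and> p4'_obj P eps (p, b) = p4_obj P eps p"
    if "p4_feas P om r0 kp p" "\<forall>p'. p4_feas P om r0 kp p' \<longrightarrow> p4_obj P eps p' \<le> p4_obj P eps p" for p
  proof -
    have "p \<in> p4_opt P eps om r0 kp"
      using that by (simp add: p4_opt_def)
    then have "\<forall>l\<in>Ls P. \<forall>e\<in>Es P. \<forall>t\<in>Ts P. 0 \<le> vnu p l e t"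
      using assms p4_opt_nu_nonneg by blast
    then show ?thesis
      using p4'_feas_theta_of p4'_obj_theta_of that(1) by blast
  qed
  show "(SUP p\<in>{p. p4_feas P om r0 kp p}. ereal (p4_obj P eps p))
          = (SUP q\<in>{q. p4'_feas P om r0 kp q}. ereal (p4'_obj P eps q))"
    by (rule relaxation_equivalence(1)[OF proj lift lift_opt])
  show "p4_opt P eps om r0 kp = fst ` p4'_opt P eps om r0 kp"
    unfolding p4_opt_def p4'_opt_def by (rule relaxation_equivalence(2)[OF proj lift lift_opt])
qed

end

section \<open>The sample-average bound\<close>

lemma p4_feas_rho_eq_traj:
  assumes feas: "p4_feas P om r0 kp p" and u: "\<forall>e\<in>Es P. \<forall>t\<in>Ts P. uOf P (vx p) e t = u e t"
    and l: "l \<in> Ls P"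
  shows "t \<in> Ts P \<Longrightarrow> e \<in> Es P \<Longrightarrow> vrho p l e t = traj P u (om l) (r0 l) (kp l) e t"
proof (induction t arbitrary: e)
  case 0
  then show ?case
    using p4_feas_dynamics(1)[OF feas l] by simp
next
  case (Suc t)
  have t: "t \<in> Ts P"
    using Suc.prems(1) by (simp add: Ts_def)
  have "e - 1 \<in> Es P" if "e \<noteq> 1"
    using Suc.prems(2) that by (auto simp: Es_def)
  then show ?case
    using p4_feas_dynamics(2)[OF feas l Suc.prems(2) t] Suc.IH[OF t] Suc.prems(2) u t by auto
qed

lemma rhoc_identity:
  assumes "0 < fbar P e" "fbar P e < ubar P e * rbar P e" "0 < ubar P e" "0 \<le> v"
  shows "(v * (rbar P e - fbar P e / ubar P e) + fbar P e) * rhoc P e v = fbar P e * rbar P e"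
proof -
  define f r u D where "f = fbar P e" and "r = rbar P e" and "u = ubar P e" and "D = u * r - f"
  have D: "0 < D" and den: "0 < f * u + v * D"
    using assms by (simp_all add: D_def f_def r_def u_def add_pos_nonneg)
  have "rhoc P e v = (f / D * r * u) / ((f * u + v * D) / D)"
    using D unfolding rhoc_def tau_def f_def r_def u_def D_def by (simp add: field_simps)
  also have "\<dots> = f * r * u / (f * u + v * D)"
    using D by simp
  finally have "rhoc P e v = f * r * u / (f * u + v * D)" .
  moreover have "v * (r - f / u) + f = (f * u + v * D) / u"
    using assms(3) by (simp add: D_def u_def field_simps)
  ultimately show ?thesis
    using den assms(3) by (simp add: f_def r_def u_def)
qed

lemma dual_coordinate_bound:
  fixes \<xi> \<zeta> c lam \<nu> \<mu> a K \<eta> :: real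
  assumes "0 \<le> \<xi>" "\<xi> \<le> c" "\<bar>\<nu>\<bar> \<le> lam" "\<nu> = \<mu> + a" "\<mu> \<le> K * \<eta>" "0 \<le> \<eta>" "0 \<le> K"
  shows "\<nu> * \<zeta> - K * c * \<eta> \<le> a * \<xi> + lam * \<bar>\<xi> - \<zeta>\<bar>"
proof -
  have "\<nu> * (\<zeta> - \<xi>) \<le> \<bar>\<nu>\<bar> * \<bar>\<xi> - \<zeta>\<bar>"
    by (metis abs_ge_self abs_minus_commute abs_mult)
  also have "\<dots> \<le> lam * \<bar>\<xi> - \<zeta>\<bar>"
    using assms(3) by (rule mult_right_mono) simp
  finally have transport: "\<nu> * (\<zeta> - \<xi>) \<le> lam * \<bar>\<xi> - \<zeta>\<bar>" .
  have "\<mu> * \<xi> \<le> K * c * \<eta>"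
  proof (cases "\<mu> \<le> 0")
    case True
    then have "\<mu> * \<xi> \<le> 0"
      using assms(1) by (rule mult_nonpos_nonneg)
    also have "0 \<le> K * c * \<eta>"
      using assms(1,2,6,7) by simp
    finally show ?thesis .
  next
    case False
    then have "\<mu> * \<xi> \<le> \<mu> * c"
      using assms(2) by simp
    also have "\<dots> \<le> K * \<eta> * c"
      using assms(1,2,5) by (intro mult_right_mono) auto
    finally show ?thesis
      by (simp add: algebra_simps)
  qed
  with transport show ?thesis
    using assms(4) by (simp add: algebra_simps)
qed

context traffic_network
begin

lemma p4_feas_sample_bound:
  assumes feas: "p4_feas P om r0 kp p" and u: "\<forall>e\<in>Es P. \<forall>t\<in>Ts P. uOf P (vx p) e t = u e t"
    and l: "l \<in> Ls P" and \<xi>: "\<xi> \<in> supp_set P u"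
  shows "(\<Sum>e\<in>Es P. \<Sum>t\<in>Ts P. vnu p l e t * vrho p l e t - fbar P e * rbar P e * veta p l e t)
    \<le> Hf P u \<xi> + vlam p * norm1 P (\<lambda>e t. \<xi> e t - trajw P u (om l) (r0 l) (kp l) e t)"
proof -
  have "Hf P u \<xi> + vlam p * norm1 P (\<lambda>e t. \<xi> e t - trajw P u (om l) (r0 l) (kp l) e t)
      = (\<Sum>e\<in>Es P. \<Sum>t\<in>Ts P. u e t / real (nT P) * \<xi> e t + vlam p * \<bar>\<xi> e t - vrho p l e t\<bar>)"
    using p4_feas_rho_eq_traj[OF feas u l]
    unfolding Hf_def norm1_def trajw_def by (simp add: sum_distrib_left sum.distrib algebra_simps)
  moreover have "vnu p l e t * vrho p l e t - fbar P e * rbar P e * veta p l e t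
      \<le> u e t / real (nT P) * \<xi> e t + vlam p * \<bar>\<xi> e t - vrho p l e t\<bar>"
    if e: "e \<in> Es P" and t: "t \<in> Ts P" for e t
  proof -
    note dual = p4_feas_dual_constraints[OF feas l e t]
    have u_pos: "0 < u e t"
      using p4_feas_uOf_pos[OF feas e t] u e t by simp
    have "(u e t * (rbar P e - fbar P e / ubar P e) + fbar P e) * rhoc P e (u e t) = fbar P e * rbar P e"
      using cells[OF e] u_pos by (intro rhoc_identity) auto
    moreover have "vnu p l e t * vrho p l e t
        - (u e t * (rbar P e - fbar P e / ubar P e) + fbar P e) * rhoc P e (u e t) * veta p l e t
        \<le> u e t / real (nT P) * \<xi> e t + vlam p * \<bar>\<xi> e t - vrho p l e t\<bar>"
    proof (rule dual_coordinate_bound)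
      show "0 \<le> \<xi> e t" "\<xi> e t \<le> rhoc P e (u e t)"
        using \<xi> e t by (auto simp: supp_set_def)
      show "0 \<le> u e t * (rbar P e - fbar P e / ubar P e) + fbar P e"
        using u_pos rbar_minus_fbar_div_ubar_nonneg[OF e] cells[OF e] by simp
    qed (use dual u e t in auto)
    ultimately show ?thesis
      by (simp add: mult.assoc)
  qed
  ultimately show ?thesis
    by (simp add: sum_mono)
qed

end

lemma p4_obj_eq_sample_mean:
  "p4_obj P eps p = (\<Sum>l\<in>Ls P. \<Sum>e\<in>Es P. \<Sum>t\<in>Ts P.
      vnu p l e t * vrho p l e t - fbar P e * rbar P e * veta p l e t) / card (Ls P) - vlam p * eps"
proof -
  have swap: "(\<Sum>l\<in>Ls P. \<Sum>e\<in>Es P. \<Sum>t\<in>Ts P. X l e t) = (\<Sum>e\<in>Es P. \<Sum>t\<in>Ts P. \<Sum>l\<in>Ls P. X l e t)"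
    for X :: "nat \<Rightarrow> nat \<Rightarrow> nat \<Rightarrow> real"
    by (subst sum.swap) (simp add: sum.swap[of _ "Ts P"])
  have "card (Ls P) = nL P"
    by (simp add: Ls_def)
  then show ?thesis
    unfolding swap p4_obj_def by (simp add: sum_subtractf diff_divide_distrib algebra_simps)
qed

lemma integrable_Hf:
  assumes "prob_space Q" "sets Q = sets TS" "AE \<xi> in Q. \<xi> \<in> supp_set P u"
  shows "integrable Q (Hf P u)"
proof -
  interpret prob_space Q by fact
  define B where "B = (\<Sum>e\<in>Es P. \<Sum>t\<in>Ts P. \<bar>rhoc P e (u e t) * u e t\<bar>) / real (nT P)"
  have "\<bar>Hf P u \<xi>\<bar> \<le> B" if "\<xi> \<in> supp_set P u" for \<xi>
  proof -
    have "\<bar>\<Sum>e\<in>Es P. \<Sum>t\<in>Ts P. \<xi> e t * u e t\<bar> \<le> (\<Sum>e\<in>Es P. \<Sum>t\<in>Ts P. \<bar>rhoc P e (u e t) * u e t\<bar>)"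
      using that unfolding supp_set_def
      by (intro order_trans[OF sum_abs] sum_mono order_trans[OF sum_abs])
        (auto simp: abs_mult intro!: mult_right_mono intro: order_trans[OF _ abs_ge_self])
    then show ?thesis
      unfolding Hf_def B_def by (simp add: abs_mult divide_right_mono)
  qed
  moreover have "Hf P u \<in> borel_measurable Q"
    unfolding measurable_cong_sets[OF assms(2) refl] by (rule Hf_measurable)
  ultimately show ?thesis
    using assms(3) by (intro integrable_const_bound[where B=B]) (auto elim: eventually_mono)
qed

lemma (in traffic_network) p4'_obj_le_integral_Hf:
  assumes Q: "Q \<in> wball P eps u (distr (uniform_count_measure (Ls P)) TS
        (\<lambda>l. trajw P u (om l) (r0 l) (kp l)))"
    and "0 \<le> eps" and feas': "p4'_feas P om r0 kp q"
    and u: "\<forall>e\<in>Es P. \<forall>t\<in>Ts P. uOf P (vx (fst q)) e t = u e t"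
  shows "p4'_obj P eps q \<le> integral\<^sup>L Q (Hf P u)"
proof -
  have feas: "p4_feas P om r0 kp (fst q)"
    using feas' by (simp add: p4'_feas_def)
  have support: "AE \<xi> in Q. \<xi> \<in> supp_set P u"
    and int: "integrable Q (Hf P u)"
    using Q integrable_Hf[of Q P u] by (auto simp: wball_def)
  have L: "finite (Ls P)" "Ls P \<noteq> {}"
    using first_indices(3) by auto
  have "p4'_obj P eps q \<le> p4_obj P eps (fst q)"
    by (rule p4'_obj_le_p4_obj[OF feas'])
  also have "\<dots> \<le> integral\<^sup>L Q (Hf P u)"
    unfolding p4_obj_eq_sample_mean
    using Q p4_feas_sample_bound[OF feas u] p4_feas_lam_nonneg[OF feas] \<open>0 \<le> eps\<close>
    by (intro Wass_empirical_integral_lower_bound[OF L support _ _ _ Hf_measurable int])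
      (auto simp: wball_def)
  finally show ?thesis .
qed

lemma gam_ge_first:
  assumes incr: "\<forall>i. 1 \<le> i \<and> i < nO P \<longrightarrow> gam P i < gam P (Suc i)" and "i \<in> Os P"
  shows "gam P 1 \<le> gam P i"
proof -
  have "1 \<le> i" "i \<le> nO P"
    using assms(2) by (auto simp: Os_def)
  then show ?thesis
  proof (induction i rule: dec_induct)
    case (step n)
    then have "gam P n < gam P (Suc n)"
      using incr by simp
    with step show ?case by simp
  qed simp
qed

lemma (in traffic_network) p4'_obj_le_expected_H_on_event:
  assumes "0 \<le> eps"
    and "\<exists>A\<in>sets M. 1 - beta \<le> measure M A \<and>
      (\<forall>s\<in>A. Pu P Pw om r0 rin ro u \<in> wball P eps u (Phat P om r0 rin ro u s))"
  shows "\<exists>A\<in>sets M. 1 - beta \<le> measure M A \<and>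
      (\<forall>s\<in>A. \<forall>q. p4'_feas P (omS om s) (r0S r0 s) (kS rin ro s) q \<and>
        (\<forall>e\<in>Es P. \<forall>t\<in>Ts P. uOf P (vx (fst q)) e t = u e t) \<longrightarrow>
        p4'_obj P eps q \<le> (\<integral>\<rho>. Hf P u \<rho> \<partial>Pu P Pw om r0 rin ro u))"
proof -
  have "p4'_obj P eps q \<le> (\<integral>\<rho>. Hf P u \<rho> \<partial>Pu P Pw om r0 rin ro u)"
    if "Pu P Pw om r0 rin ro u \<in> wball P eps u (Phat P om r0 rin ro u s)"
      and "p4'_feas P (omS om s) (r0S r0 s) (kS rin ro s) q"
      and "\<forall>e\<in>Es P. \<forall>t\<in>Ts P. uOf P (vx (fst q)) e t = u e t" for s q
    using p4'_obj_le_integral_Hf[OF _ assms(1) that(2,3)] that(1)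
    by (simp add: Phat_def omS_def r0S_def kS_def)
  with assms(2) show ?thesis
    by blast
qed

theorem lemma4:
  fixes P :: netp and eps beta :: real and Pw :: "'w measure"
    and om r0 :: "'w \<Rightarrow> nat \<Rightarrow> real" and rin ro :: "'w \<Rightarrow> nat \<Rightarrow> nat \<Rightarrow> real"
  assumes dims: "1 \<le> nE P" "1 \<le> nT P" "1 \<le> nL P" "1 \<le> nO P"
    and gam_pos: "0 < gam P 1"
    and gam_incr: "\<forall>i. 1 \<le> i \<and> i < nO P \<longrightarrow> gam P i < gam P (Suc i)"
    and cells: "\<forall>e\<in>Es P. 0 < hh P e \<and> 0 < rbar P e \<and> 0 < fbar P e \<and> 0 < ubar P e
                  \<and> ubar P e * rbar P e > fbar P e"
    and etab_pos: "0 < etab P"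
    and prob: "prob_space Pw"
    and meas_om: "\<forall>t\<in>Ts P. (\<lambda>w. om w t) \<in> borel_measurable Pw"
    and meas_r0: "\<forall>e\<in>Es P. (\<lambda>w. r0 w e) \<in> borel_measurable Pw"
    and meas_r: "\<forall>e\<in>Es P. \<forall>t\<in>Ts P. (\<lambda>w. rin w e t) \<in> borel_measurable Pw
                   \<and> (\<lambda>w. ro w e t) \<in> borel_measurable Pw"
    and ranges: "\<forall>w\<in>space Pw. (\<forall>t\<in>Ts P. 0 \<le> om w t) \<and> (\<forall>e\<in>Es P. 0 \<le> r0 w e) \<and>
                   (\<forall>e\<in>Es P. \<forall>t\<in>Ts P. 0 \<le> rin w e t \<and> rin w e t < 1 \<and> 0 \<le> ro w e t \<and> ro w e t < 1)"
    and light: "\<exists>a>1. (\<integral>\<^sup>+ w. ennreal (exp (wnorm P om r0 rin ro w powr a)) \<partial>Pw) < \<infinity>"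
    and beta: "0 < beta" "beta < 1"
    and eps_pos: "0 < eps"
    and eps_ball: "\<forall>u. (\<forall>e\<in>Es P. \<forall>t\<in>Ts P. u e t \<in> gam P ` Os P) \<longrightarrow>
        (\<exists>A\<in>sets (ProbN P Pw). measure (ProbN P Pw) A \<ge> 1 - beta \<and>
           (\<forall>s\<in>A. Pu P Pw om r0 rin ro u \<in> wball P eps u (Phat P om r0 rin ro u s)))"
  shows
    "(\<forall>s::nat \<Rightarrow> 'w.
        (\<forall>p\<in>p4_opt P eps (omS om s) (r0S r0 s) (kS rin ro s).
            \<forall>l\<in>Ls P. \<forall>e\<in>Es P. \<forall>t\<in>Ts P. eps \<le> vrho p l e t) \<longrightarrow>
        (SUP p\<in>{p. p4_feas P (omS om s) (r0S r0 s) (kS rin ro s) p}. ereal (p4_obj P eps p))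
          = (SUP q\<in>{q. p4'_feas P (omS om s) (r0S r0 s) (kS rin ro s) q}. ereal (p4'_obj P eps q))
        \<and> p4_opt P eps (omS om s) (r0S r0 s) (kS rin ro s)
          = fst ` p4'_opt P eps (omS om s) (r0S r0 s) (kS rin ro s))
     \<and>
     (\<forall>u. (\<forall>e\<in>Es P. \<forall>t\<in>Ts P. u e t \<in> gam P ` Os P) \<longrightarrow>
        (\<exists>A\<in>sets (ProbN P Pw). measure (ProbN P Pw) A \<ge> 1 - beta \<and>
           (\<forall>s\<in>A. \<forall>q. p4'_feas P (omS om s) (r0S r0 s) (kS rin ro s) q \<and>
                (\<forall>e\<in>Es P. \<forall>t\<in>Ts P. uOf P (vx (fst q)) e t = u e t) \<longrightarrow>
                p4'_obj P eps q \<le> (\<integral>\<rho>. Hf P u \<rho> \<partial>(Pu P Pw om r0 rin ro u)))))"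
proof -
  interpret traffic_network P
  proof
    show "0 < gam P i" if "i \<in> Os P" for i
      using gam_ge_first[OF gam_incr that] gam_pos by simp
  qed (use dims cells in auto)
  have rho_pos: "\<forall>p\<in>p4_opt P eps om' r0' kp'. \<forall>l\<in>Ls P. \<forall>e\<in>Es P. \<forall>t\<in>Ts P. 0 < vrho p l e t"
    if "\<forall>p\<in>p4_opt P eps om' r0' kp'. \<forall>l\<in>Ls P. \<forall>e\<in>Es P. \<forall>t\<in>Ts P. eps \<le> vrho p l e t"
    for om' r0' kp'
    using that eps_pos by fastforce
  show ?thesis
    using p4_p4'_equivalent[OF rho_pos]
      p4'_obj_le_expected_H_on_event[OF less_imp_le[OF eps_pos] eps_ball[rule_format]]
    by (intro conjI allI impI) auto
qed

end
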